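(* Let $\kappa\in[1/2,1)$ and let $T$ be a rooted binary tree with $n\ge1$ leaves in which every internal node has exactly two children and, at every internal node, $L\le\kappa N$ and $R\le\kappa N$, where $L$ and $R$ are the numbers of leaves in its left and right subtrees and $N=L+R$. Then the sum, over all leaves of $T$, of their depths is at most $\dfrac{n\log n}{H(\kappa)}$, where $H(\kappa)=-\kappa\log\kappa-(1-\kappa)\log(1-\kappa)$ (with the same logarithm base in numerator and $H$).
   Context: The depth of a leaf is the number of edges on the path from the root to that leaf. *)

theory Defs
  imports Complex_Main
begin

datatype btree = Leaf | Node btree btree

fun leaves :: "btree \<Rightarrow> nat" where
  "leaves Leaf = 1"
| "leaves (Node l r) = leaves l + leaves r"

text \<open>Multiset of leaf depths (depth = number of edges from the root).\<close>
fun leaf_depths :: "btree \<Rightarrow> nat list" where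
  "leaf_depths Leaf = [0]"
| "leaf_depths (Node l r) = map Suc (leaf_depths l @ leaf_depths r)"

definition depth_sum :: "btree \<Rightarrow> nat" where
  "depth_sum t = sum_list (leaf_depths t)"

fun balanced :: "real \<Rightarrow> btree \<Rightarrow> bool" where
  "balanced k Leaf = True"
| "balanced k (Node l r) =
     (real (leaves l) \<le> k * real (leaves l + leaves r) \<and>
      real (leaves r) \<le> k * real (leaves l + leaves r) \<and>
      balanced k l \<and> balanced k r)"

text \<open>Binary entropy (natural logarithm; the base cancels in the bound).\<close>
definition H :: "real \<Rightarrow> real" where
  "H k = - k * ln k - (1 - k) * ln (1 - k)"

end

theory Submission
  imports Defs
begin

(* Write n(T) for the number of leaves and D(T) for the sum of leaf
   depths.  Splitting at the root, D(Node l r) = D(l) + D(r) + n(l) + n(r), and the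
   binary entropy satisfies the grouping identity
       N * H(a/N) = N ln N - a ln a - b ln b      (a, b > 0, N = a + b).
   Since H is symmetric about 1/2 and decreasing on [1/2, 1), a kappa-balanced
   split a/N \<in> [1 - kappa, kappa] has H(a/N) \<ge> H(kappa).  Hence, by induction on T,
       H(kappa) * D(T) \<le> n(T) ln n(T),
   the root contributing H(kappa) * N \<le> N * H(a/N) which exactly covers the gap
   between N ln N and the inductive bounds a ln a + b ln b.  Dividing by
   H(kappa) > 0 gives the theorem.  The file first records the tree recurrences,
   then the entropy facts, then the inductive bound, and finally the theorem. *)

lemma length_leaf_depths: "length (leaf_depths t) = leaves t"
  by (induction t) auto

lemma leaves_ge_1: "1 \<le> leaves t"
  by (induction t) auto

text \<open>Every leaf of a subtree is one level deeper in the whole tree.\<close>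
lemma depth_sum_Node:
  "depth_sum (Node l r) = depth_sum l + depth_sum r + leaves l + leaves r"
proof -
  have sum_Suc: "sum_list (map Suc xs) = sum_list xs + length xs" for xs :: "nat list"
    by (induction xs) auto
  show ?thesis
    by (simp add: depth_sum_def sum_Suc length_leaf_depths)
qed

lemma H_symmetric: "H (1 - p) = H p"
  by (simp add: H_def algebra_simps)

lemma H_pos:
  assumes "0 < p" "p < 1"
  shows "0 < H p"
proof -
  have "p * ln p < 0" "(1 - p) * ln (1 - p) < 0"
    using assms by (simp_all add: mult_pos_neg)
  then show ?thesis by (simp add: H_def)
qed

text \<open>On the open unit interval H has derivative ln (1 - x) - ln x, which is
  non-positive for x \<ge> 1/2; hence H decreases on [1/2, 1).\<close>
lemma H_antimono:
  assumes "1/2 \<le> p" "p \<le> q" "q < 1"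
  shows "H q \<le> H p"
proof (rule DERIV_nonpos_imp_decreasing_open[OF assms(2)])
  fix x assume "p < x" "x < q"
  then have x: "0 < x" "x < 1" "1/2 < x" using assms by auto
  have "DERIV H x :> ln (1 - x) - ln x"
    unfolding H_def by (rule derivative_eq_intros refl | use x in simp)+
  moreover have "ln (1 - x) - ln x \<le> 0" using x by simp
  ultimately show "\<exists>y. DERIV H x :> y \<and> y \<le> 0" by blast
next
  show "continuous_on {p..q} H"
    unfolding H_def using assms by (intro continuous_intros) auto
qed

lemma H_lower_bound:
  assumes "1 - k \<le> p" "p \<le> k" "k < 1"
  shows "H k \<le> H p"
proof (cases "1/2 \<le> p")
  case True
  then show ?thesis using H_antimono assms by auto
next
  case False
  then have "H k \<le> H (1 - p)" using H_antimono[of "1 - p" k] assms by auto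
  then show ?thesis by (simp add: H_symmetric)
qed

lemma H_grouping:
  fixes a b :: real
  assumes "0 < a" "0 < b"
  shows "(a + b) * H (a / (a + b)) = (a + b) * ln (a + b) - a * ln a - b * ln b"
proof -
  let ?n = "a + b"
  have weights: "?n * (a / ?n) = a" "1 - a / ?n = b / ?n" "?n * (b / ?n) = b"
    using assms by (simp_all add: field_simps)
  have "?n * H (a / ?n)
        = - (?n * (a / ?n)) * ln (a / ?n) - (?n * (1 - a / ?n)) * ln (1 - a / ?n)"
    by (simp add: H_def algebra_simps)
  also have "\<dots> = - a * ln (a / ?n) - b * ln (b / ?n)"
    by (simp only: weights)
  also have "\<dots> = ?n * ln ?n - a * ln a - b * ln b"
    using assms by (simp add: ln_div algebra_simps)
  finally show ?thesis .
qed

text \<open>Multiplied-out form of the theorem, which is what the induction carries.\<close>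
lemma entropy_depth_sum_bound:
  assumes "k < 1" "balanced k T"
  shows "H k * real (depth_sum T) \<le> real (leaves T) * ln (real (leaves T))"
  using assms(2)
proof (induction T)
  case Leaf
  then show ?case by (simp add: depth_sum_def)
next
  case (Node l r)
  define a where "a = real (leaves l)"
  define b where "b = real (leaves r)"
  have pos: "0 < a" "0 < b"
    using leaves_ge_1 by (simp_all add: a_def b_def Suc_le_eq)
  have IH: "H k * real (depth_sum l) \<le> a * ln a" "H k * real (depth_sum r) \<le> b * ln b"
    using Node by (auto simp: a_def b_def)
  have "a \<le> k * (a + b)" "b \<le> k * (a + b)"
    using Node.prems by (auto simp: a_def b_def)
  then have "a / (a + b) \<le> k" "1 - k \<le> a / (a + b)"
    using pos by (simp_all add: field_simps)
  then have root: "H k * (a + b) \<le> (a + b) * H (a / (a + b))"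
    using H_lower_bound[of k "a / (a + b)"] assms(1) pos by (simp add: mult.commute)
  have "H k * real (depth_sum (Node l r))
        = H k * real (depth_sum l) + H k * real (depth_sum r) + H k * (a + b)"
    by (simp add: depth_sum_Node a_def b_def algebra_simps)
  also have "\<dots> \<le> a * ln a + b * ln b + (a + b) * H (a / (a + b))"
    using IH root by linarith
  also have "\<dots> = (a + b) * ln (a + b)"
    using H_grouping[OF pos] by simp
  finally show ?case by (simp add: a_def b_def)
qed

theorem theorem4:
  fixes \<kappa> :: real and T :: btree
  assumes "1/2 \<le> \<kappa>" and "\<kappa> < 1"
    and "balanced \<kappa> T"
  shows "real (depth_sum T) \<le> real (leaves T) * ln (real (leaves T)) / H \<kappa>"
proof -
  have "0 < H \<kappa>" using H_pos assms(1,2) by simp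
  then show ?thesis
    using entropy_depth_sum_bound[OF assms(2,3)] by (simp add: pos_le_divide_eq mult.commute)
qed

end
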